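(* Let $\mathscr X=[0,1]^4$ with the Euclidean norm $\|\cdot\|_2$. Let $\mathbf x_1=(1/2,1/2,1/2,1/2)$ and, for $n\ge1$, let $\mathbf x_{n+1}$ be any point of $\mathrm{Arg}\max_{\mathbf x\in\mathscr X}\min_{1\le i\le n}\|\mathbf x-\mathbf x_i\|_2$, with $\mathbf X_n=\{\mathbf x_1,\ldots,\mathbf x_n\}$. Let $n_m=(2^m+1)^4+2^{4m}$, $\gamma_m=2^{-m}$, $\ell_m=6\cdot2^{2m}(2^m+1)^2$, and for $n\ge17$ let $m=m(n)$ be the unique integer with $n_m\le n<n_{m+1}$. Then: - for $n=n_m$: $\mathsf{SR}(\mathbf X_n)=\gamma_m/2$, $\mathsf{CR}(\mathbf X_n)=\gamma_m\sqrt2/2$, $\mathsf{MR}(\mathbf X_n)=\sqrt2$; - for $n=n_m+1,\ldots,n_m+\ell_m-1$: $\mathsf{SR}(\mathbf X_n)=\gamma_m/(2\sqrt2)$, $\mathsf{CR}(\mathbf X_n)=\gamma_m\sqrt2/2$, $\mathsf{MR}(\mathbf X_n)=2$; - for $n=n_m+\ell_m$: $\mathsf{SR}(\mathbf X_n)=\gamma_m/(2\sqrt2)$, $\mathsf{CR}(\mathbf X_n)=\gamma_m/2$, $\mathsf{MR}(\mathbf X_n)=\sqrt2$; - for $n=n_m+\ell_m+1,\ldots,n_{m+1}-1$: $\mathsf{SR}(\mathbf X_n)=\gamma_m/4$, $\mathsf{CR}(\mathbf X_n)=\gamma_m/2$, $\mathsf{MR}(\mathbf X_n)=2$.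
   Context: Fill distance $\mathsf{CR}(\mathbf X_n)=\sup_{\mathbf x\in\mathscr X}\min_{i\le n}\|\mathbf x-\mathbf x_i\|_2$; separation radius $\mathsf{SR}(\mathbf X_n)=\tfrac12\min_{i\ne j\le n}\|\mathbf x_i-\mathbf x_j\|_2$; mesh-ratio $\mathsf{MR}(\mathbf X_n)=\mathsf{CR}(\mathbf X_n)/\mathsf{SR}(\mathbf X_n)$. *)

theory Defs
  imports "HOL-Analysis.Analysis"
begin

definition cube4 :: "(real^4) set" where
  "cube4 = {v. \<forall>i. 0 \<le> v $ i \<and> v $ i \<le> 1}"

text \<open>Points are indexed from 1: X_n = {x 1, ..., x n}.\<close>
definition min_dist :: "(nat \<Rightarrow> real^4) \<Rightarrow> nat \<Rightarrow> real^4 \<Rightarrow> real" where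
  "min_dist x n y = Min {dist y (x i) | i. i \<in> {1..n}}"

definition CR :: "(nat \<Rightarrow> real^4) \<Rightarrow> nat \<Rightarrow> real" where
  "CR x n = (SUP y\<in>cube4. min_dist x n y)"

definition SR :: "(nat \<Rightarrow> real^4) \<Rightarrow> nat \<Rightarrow> real" where
  "SR x n = Min {dist (x i) (x j) | i j. i \<in> {1..n} \<and> j \<in> {1..n} \<and> i \<noteq> j} / 2"

definition MR :: "(nat \<Rightarrow> real^4) \<Rightarrow> nat \<Rightarrow> real" where
  "MR x n = CR x n / SR x n"

definition n_m :: "nat \<Rightarrow> nat" where
  "n_m m = (2^m + 1)^4 + 2^(4*m)"

definition gamma_m :: "nat \<Rightarrow> real" where
  "gamma_m m = 1 / 2^m"

definition l_m :: "nat \<Rightarrow> nat" where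
  "l_m m = 6 * 2^(2*m) * (2^m + 1)^2"

end

theory Submission
  imports Defs
begin

text \<open>
  Classify the points of the cube whose coordinates are multiples of 1/(2K) by the set s of
  coordinates that are odd multiples. The cubic grid together with its cell centres (s empty
  or full) is a body-centred grid A(K) with separation 1/K and covering radius sqrt 2/(2K), and
  the points at that distance from A(K) are exactly the centres of the 2-faces; adding them
  gives the checkerboard grid B(K) (card s even), a scaled copy of the lattice D4. In turn B(K)
  has separation sqrt 2/(2K) and covering radius 1/(2K), and the points at that distance from
  it lie in A(2K). In both cases the candidate farthest points are mutually at least the
  covering radius apart, so once farthest-point insertion has produced A(K) it must add all of
  B(K) - A(K) and then all of A(2K) - B(K), in some order. Starting from the centre of the cube
  this gives X(n_m) = A(2^m), where n_m = |A(2^m)| and n_m + l_m = |B(2^m)|, and on each stretch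
  the separation and covering radii are those of the two grids between which X(n) lies.
\<close>


lemma power2_dist_vec: "(dist (v::real^'n) w)\<^sup>2 = (\<Sum>t\<in>UNIV. (v$t - w$t)\<^sup>2)"
  unfolding dist_vec_def L2_set_def dist_real_def by (simp add: sum_nonneg)

lemma card_Compl_finite: "card (- (s::'a::finite set)) = CARD('a) - card s"
  by (metis Compl_eq_Diff_UNIV card_Diff_subset finite subset_UNIV)

lemma card_vec_set:
  assumes "\<And>t. finite (F t)"
  shows "finite {v::'a^'n. \<forall>t. v$t \<in> F t} \<and> card {v::'a^'n. \<forall>t. v$t \<in> F t} = (\<Prod>t\<in>UNIV. card (F t))"
proof -
  have eq: "{v::'a^'n. \<forall>t. v$t \<in> F t} = vec_lambda ` PiE UNIV F"
  proof safe
    fix v :: "'a^'n" assume "\<forall>t. v$t \<in> F t"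
    then have "vec_nth v \<in> PiE UNIV F" by auto
    then show "v \<in> vec_lambda ` PiE UNIV F"
      by (rule rev_image_eqI) simp
  qed auto
  have "inj_on vec_lambda (PiE UNIV F)"
    by (rule inj_onI) (metis vec_lambda_inverse UNIV_I)
  then show ?thesis
    unfolding eq using assms by (simp add: card_image card_PiE finite_PiE)
qed

lemma sum_if_mem_const:
  "(\<Sum>t\<in>(UNIV::'a::finite set). if t \<in> D then c else 0) = real (card D) * c"
proof -
  have "real (card D) * c = (\<Sum>t\<in>D. c)" by simp
  also have "\<dots> = (\<Sum>t\<in>UNIV. if t \<in> D then c else 0)" by (simp add: sum.inter_restrict[symmetric])
  finally show ?thesis ..
qed

lemma sum_sq_split_le:
  fixes \<alpha> \<beta> :: "'a::finite \<Rightarrow> real" and D :: real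
  assumes "\<And>t. 0 \<le> \<alpha> t" "\<And>t. 0 \<le> \<beta> t" "\<And>t. \<alpha> t + \<beta> t = D"
  shows "(\<Sum>t\<in>UNIV. (\<alpha> t)\<^sup>2) + (\<Sum>t\<in>UNIV. (\<beta> t)\<^sup>2) \<le> real CARD('a) * D\<^sup>2"
    and "real CARD('a) * D\<^sup>2 \<le> (\<Sum>t\<in>UNIV. (\<alpha> t)\<^sup>2) + (\<Sum>t\<in>UNIV. (\<beta> t)\<^sup>2) \<Longrightarrow> \<alpha> t = 0 \<or> \<beta> t = 0"
proof -
  have pointwise: "(\<alpha> t)\<^sup>2 + (\<beta> t)\<^sup>2 = D\<^sup>2 - 2 * (\<alpha> t * \<beta> t)" for t
    using assms(3)[of t, symmetric] by (simp add: power2_eq_square algebra_simps)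
  have nonneg: "0 \<le> \<alpha> t * \<beta> t" for t using assms(1,2) by simp
  have sum_eq: "(\<Sum>t\<in>UNIV. (\<alpha> t)\<^sup>2) + (\<Sum>t\<in>UNIV. (\<beta> t)\<^sup>2) = real CARD('a) * D\<^sup>2 - 2 * (\<Sum>t\<in>UNIV. \<alpha> t * \<beta> t)"
    by (simp add: sum.distrib[symmetric] pointwise sum_subtractf sum_distrib_left)
  show "(\<Sum>t\<in>UNIV. (\<alpha> t)\<^sup>2) + (\<Sum>t\<in>UNIV. (\<beta> t)\<^sup>2) \<le> real CARD('a) * D\<^sup>2"
    unfolding sum_eq using sum_nonneg[of UNIV "\<lambda>t. \<alpha> t * \<beta> t"] nonneg by simp
  assume "real CARD('a) * D\<^sup>2 \<le> (\<Sum>t\<in>UNIV. (\<alpha> t)\<^sup>2) + (\<Sum>t\<in>UNIV. (\<beta> t)\<^sup>2)"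
  then have "(\<Sum>t\<in>UNIV. \<alpha> t * \<beta> t) = 0"
    unfolding sum_eq using sum_nonneg[of UNIV "\<lambda>t. \<alpha> t * \<beta> t"] nonneg by simp
  then have "\<alpha> t * \<beta> t = 0" using sum_nonneg_eq_0_iff[of UNIV "\<lambda>t. \<alpha> t * \<beta> t"] nonneg by simp
  then show "\<alpha> t = 0 \<or> \<beta> t = 0" by simp
qed

lemma sum_sq_le_quarter:
  fixes d :: "'a::finite \<Rightarrow> real"
  assumes "\<And>t. 0 \<le> d t" "\<And>t. d t \<le> 1/2"
  shows "(\<Sum>t\<in>UNIV. (d t)\<^sup>2) \<le> CARD('a) / 4"
    and "CARD('a) / 4 \<le> (\<Sum>t\<in>UNIV. (d t)\<^sup>2) \<Longrightarrow> d t = 1/2"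
proof -
  have le: "(d t)\<^sup>2 \<le> 1/4" for t
    using power_mono[OF assms(2)[of t] assms(1)[of t], of 2] by (simp add: power_divide)
  then show "(\<Sum>t\<in>UNIV. (d t)\<^sup>2) \<le> CARD('a) / 4"
    using sum_mono[of UNIV "\<lambda>t. (d t)\<^sup>2" "\<lambda>_. 1/4"] by simp
  assume "CARD('a) / 4 \<le> (\<Sum>t\<in>UNIV. (d t)\<^sup>2)"
  then have "(\<Sum>t\<in>UNIV. (d t)\<^sup>2) = (\<Sum>t\<in>(UNIV::'a set). 1/4)"
    using sum_mono[of UNIV "\<lambda>t. (d t)\<^sup>2" "\<lambda>_. 1/4"] le by simp
  then have "(d t)\<^sup>2 = (1/2)\<^sup>2"
    using sum_mono_inv[of "\<lambda>t. (d t)\<^sup>2" UNIV "\<lambda>_. 1/4" t] le by (simp add: power_divide)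
  then show "d t = 1/2" using assms(1)[of t] by (simp add: power2_eq_iff_nonneg)
qed

lemma sum_sq_flip_max_le_one:
  fixes d :: "4 \<Rightarrow> real"
  assumes "\<And>t. 0 \<le> d t" "\<And>t. d t \<le> 1/2" and max: "\<And>t. d t \<le> d i"
  shows "(1 - d i)\<^sup>2 + (\<Sum>t\<in>-{i}. (d t)\<^sup>2) \<le> 1"
    and "1 \<le> (1 - d i)\<^sup>2 + (\<Sum>t\<in>-{i}. (d t)\<^sup>2) \<Longrightarrow> (\<forall>t. d t = 0) \<or> (\<forall>t. d t = 1/2)"
proof -
  have card3: "card (- {i}) = 3" by (simp add: Compl_eq_Diff_UNIV card_Diff_singleton)
  have le: "(d t)\<^sup>2 \<le> (d i)\<^sup>2" for t by (rule power_mono[OF max assms(1)])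
  have rest: "(\<Sum>t\<in>-{i}. (d t)\<^sup>2) \<le> 3 * (d i)\<^sup>2"
    using sum_mono[of "-{i}" "\<lambda>t. (d t)\<^sup>2" "\<lambda>_. (d i)\<^sup>2"] le card3 by simp
  have id: "(1 - d i)\<^sup>2 + 3 * (d i)\<^sup>2 = 1 - 2 * (d i * (1 - 2 * d i))"
    by (simp add: power2_eq_square algebra_simps)
  have nonneg: "0 \<le> d i * (1 - 2 * d i)" using assms(1,2)[of i] by simp
  show "(1 - d i)\<^sup>2 + (\<Sum>t\<in>-{i}. (d t)\<^sup>2) \<le> 1" using rest id nonneg by linarith
  assume ge: "1 \<le> (1 - d i)\<^sup>2 + (\<Sum>t\<in>-{i}. (d t)\<^sup>2)"
  then have "d i * (1 - 2 * d i) = 0" using rest id nonneg by linarith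
  then consider "d i = 0" | "d i = 1/2" by fastforce
  then show "(\<forall>t. d t = 0) \<or> (\<forall>t. d t = 1/2)"
  proof cases
    case 1
    then show ?thesis using assms(1) max by (metis order_antisym)
  next
    case 2
    have "(\<Sum>t\<in>UNIV. (d t)\<^sup>2) = (d i)\<^sup>2 + (\<Sum>t\<in>-{i}. (d t)\<^sup>2)"
      by (simp add: sum.remove[of UNIV i] Compl_eq_Diff_UNIV)
    then have "CARD(4) / 4 \<le> (\<Sum>t\<in>UNIV. (d t)\<^sup>2)" using ge 2 by (simp add: power2_eq_square)
    then have "d t = 1/2" for t using sum_sq_le_quarter(2)[of d t] assms(1,2) by blast
    then show ?thesis by blast
  qed
qed

lemma card_sym_diff_even:
  assumes "finite s1" "finite s2" "even (card s1)" "even (card s2)" "s1 \<noteq> s2"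
  shows "2 \<le> card (sym_diff s1 s2)"
proof -
  have "card (sym_diff s1 s2) = card (s1 - s2) + card (s2 - s1)"
    using assms(1,2) by (intro card_Un_disjoint) auto
  moreover have "card (s1 - s2) = card s1 - card (s1 \<inter> s2)" "card (s2 - s1) = card s2 - card (s1 \<inter> s2)"
    using assms(1,2) by (simp_all add: card_Diff_subset_Int Int_commute)
  moreover have "card (s1 \<inter> s2) \<le> card s1" "card (s1 \<inter> s2) \<le> card s2"
    using assms(1,2) by (simp_all add: card_mono)
  moreover have "card (sym_diff s1 s2) \<noteq> 0"
    using assms by auto
  ultimately show ?thesis using assms(3,4) by presburger
qed

lemma even_card_odd_update:
  fixes r :: "'a::finite \<Rightarrow> nat"
  assumes "odd k \<longleftrightarrow> even (r i)"
  shows "even (card {t. odd ((r(i := k)) t)}) \<longleftrightarrow> odd (card {t. odd (r t)})"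
proof (cases "odd (r i)")
  case True
  then have "{t. odd ((r(i := k)) t)} = {t. odd (r t)} - {i}" using assms by auto
  moreover have "card ({t. odd (r t)} - {i}) + 1 = card {t. odd (r t)}"
    using True card_Suc_Diff1[of "{t. odd (r t)}" i] by simp
  ultimately show ?thesis by (metis even_add odd_one)
next
  case False
  then have "{t. odd ((r(i := k)) t)} = insert i {t. odd (r t)}" using assms by auto
  then show ?thesis using False by simp
qed

section \<open>Coordinates on the half grid\<close>

definition grid_coords :: "nat \<Rightarrow> real set" where
  "grid_coords K = {real j / (2 * real K) | j. j \<le> 2 * K \<and> even j}"

definition mid_coords :: "nat \<Rightarrow> real set" where
  "mid_coords K = {real j / (2 * real K) | j. j \<le> 2 * K \<and> odd j}"

lemma half_coord_mem:
  "j \<le> 2 * K \<Longrightarrow> real j / (2 * real K) \<in> (if even j then grid_coords K else mid_coords K)"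
  unfolding grid_coords_def mid_coords_def by auto

lemma half_coords_range:
  assumes "K \<ge> 1" and "a \<in> grid_coords K \<union> mid_coords K"
  shows "0 \<le> a \<and> a \<le> 1"
proof -
  obtain j where "j \<le> 2 * K" "a = real j / (2 * real K)"
    using assms(2) unfolding grid_coords_def mid_coords_def by auto
  then show ?thesis by (auto simp: divide_le_eq_1)
qed

lemma grid_mid_coords_disjoint:
  assumes "K \<ge> 1" shows "grid_coords K \<inter> mid_coords K = {}"
  using assms unfolding grid_coords_def mid_coords_def by (auto simp: field_simps)

lemma card_grid_coords:
  assumes "K \<ge> 1" shows "finite (grid_coords K) \<and> card (grid_coords K) = K + 1"
proof -
  have "grid_coords K = (\<lambda>k. real (2 * k) / (2 * real K)) ` {0..K}"
    unfolding grid_coords_def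
  proof safe
    fix j assume "j \<le> 2 * K" "even j"
    then show "real j / (2 * real K) \<in> (\<lambda>k. real (2 * k) / (2 * real K)) ` {0..K}"
      by (auto elim!: evenE)
  next
    fix k assume "k \<in> {0..K}"
    then show "\<exists>j. real (2 * k) / (2 * real K) = real j / (2 * real K) \<and> j \<le> 2 * K \<and> even j"
      by (intro exI[of _ "2 * k"]) auto
  qed
  moreover have "inj_on (\<lambda>k. real (2 * k) / (2 * real K)) {0..K}"
    using assms by (auto simp: inj_on_def field_simps)
  ultimately show ?thesis by (simp add: card_image)
qed

lemma card_mid_coords:
  assumes "K \<ge> 1" shows "finite (mid_coords K) \<and> card (mid_coords K) = K"
proof -
  have "mid_coords K = (\<lambda>k. real (2 * k + 1) / (2 * real K)) ` {..<K}"
    unfolding mid_coords_def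
  proof safe
    fix j assume "j \<le> 2 * K" "odd j"
    then show "real j / (2 * real K) \<in> (\<lambda>k. real (2 * k + 1) / (2 * real K)) ` {..<K}"
      by (auto elim!: oddE)
  next
    fix k assume "k < K"
    then show "\<exists>j. real (2 * k + 1) / (2 * real K) = real j / (2 * real K) \<and> j \<le> 2 * K \<and> odd j"
      by (intro exI[of _ "2 * k + 1"]) auto
  qed
  moreover have "inj_on (\<lambda>k. real (2 * k + 1) / (2 * real K)) {..<K}"
    using assms by (auto simp: inj_on_def field_simps)
  ultimately show ?thesis by (simp add: card_image)
qed

lemma half_coords_subset_double:
  assumes "K \<ge> 1" shows "grid_coords K \<union> mid_coords K \<subseteq> grid_coords (2 * K)"
proof
  fix a assume "a \<in> grid_coords K \<union> mid_coords K"
  then obtain j where j: "j \<le> 2 * K" "a = real j / (2 * real K)"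
    unfolding grid_coords_def mid_coords_def by auto
  then show "a \<in> grid_coords (2 * K)"
    unfolding grid_coords_def by (intro CollectI exI[of _ "2 * j"]) auto
qed

lemma half_coords_sep:
  assumes "K \<ge> 1" and "i \<noteq> j"
  shows "(if even i = even j then 1 / real K else 1 / (2 * real K))
           \<le> \<bar>real i / (2 * real K) - real j / (2 * real K)\<bar>"
proof -
  have "(if even i = even j then 2 else 1) \<le> \<bar>int i - int j\<bar>"
    using assms(2) by presburger
  then have "of_int (if even i = even j then 2 else 1) \<le> (of_int \<bar>int i - int j\<bar> :: real)"
    by (simp only: of_int_le_iff)
  then have "(if even i = even j then 2 else 1) \<le> \<bar>real i - real j\<bar>"
    by (auto split: if_splits)
  then have "(if even i = even j then 2 else 1) / (2 * real K) \<le> \<bar>real i - real j\<bar> / (2 * real K)"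
    by (intro divide_right_mono) auto
  then show ?thesis
    using assms(1) by (auto simp: diff_divide_distrib[symmetric] split: if_splits)
qed

lemma grid_coords_sep:
  assumes "K \<ge> 1" "a \<in> grid_coords K" "b \<in> grid_coords K" "a \<noteq> b"
  shows "1 / real K \<le> \<bar>a - b\<bar>"
proof -
  obtain i j where "a = real i / (2 * real K)" "b = real j / (2 * real K)" "even i" "even j"
    using assms(2,3) unfolding grid_coords_def by blast
  then show ?thesis using half_coords_sep[OF assms(1), of i j] assms(4) by auto
qed

lemma mid_coords_sep:
  assumes "K \<ge> 1" "a \<in> mid_coords K" "b \<in> mid_coords K" "a \<noteq> b"
  shows "1 / real K \<le> \<bar>a - b\<bar>"
proof -
  obtain i j where "a = real i / (2 * real K)" "b = real j / (2 * real K)" "odd i" "odd j"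
    using assms(2,3) unfolding mid_coords_def by blast
  then show ?thesis using half_coords_sep[OF assms(1), of i j] assms(4) by auto
qed

lemma grid_mid_coords_sep:
  assumes "K \<ge> 1" "a \<in> grid_coords K" "b \<in> mid_coords K"
  shows "1 / (2 * real K) \<le> \<bar>a - b\<bar>"
proof -
  obtain i j where "a = real i / (2 * real K)" "b = real j / (2 * real K)" "even i" "odd j"
    using assms(2,3) unfolding grid_coords_def mid_coords_def by blast
  then show ?thesis using half_coords_sep[OF assms(1), of i j] by auto
qed

lemma half_grid_bracket:
  assumes "K \<ge> 1" "0 \<le> y" "y \<le> 1"
  obtains j where "j < 2 * K" "real j \<le> 2 * real K * y" "2 * real K * y \<le> real j + 1"
proof (cases "y = 1")
  case True
  then show ?thesis using that[of "2 * K - 1"] assms(1) by (simp add: of_nat_diff)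
next
  case False
  define j where "j = nat \<lfloor>2 * real K * y\<rfloor>"
  have "0 \<le> 2 * real K * y" using assms by simp
  then have j: "real j = of_int \<lfloor>2 * real K * y\<rfloor>" unfolding j_def by simp
  have "2 * real K * y < 2 * real K" using False assms by simp
  then show ?thesis using that[of j] j by linarith
qed

lemma coord_bracket:
  assumes K: "K \<ge> 1" and "0 \<le> y" "y \<le> 1"
  obtains a b where "a \<in> grid_coords K" "b \<in> mid_coords K" "\<bar>y - a\<bar> + \<bar>y - b\<bar> = 1 / (2 * real K)"
proof -
  obtain j where j: "j < 2 * K" "real j \<le> 2 * real K * y" "2 * real K * y \<le> real j + 1"
    using half_grid_bracket[OF assms] .
  have Kpos: "real K > 0" using K by simp
  have "\<bar>y - real j / (2 * real K)\<bar> + \<bar>y - real (j + 1) / (2 * real K)\<bar> = 1 / (2 * real K)"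
    using j(2,3) Kpos by (simp add: abs_if field_simps)
  moreover have "real j / (2 * real K) \<in> (if even j then grid_coords K else mid_coords K)"
    "real (j + 1) / (2 * real K) \<in> (if even (j + 1) then grid_coords K else mid_coords K)"
    using j(1) by (intro half_coord_mem; simp)+
  ultimately show ?thesis
    using that by (cases "even j") (auto simp: add.commute)
qed

lemma coord_round:
  assumes K: "K \<ge> 1" and "0 \<le> y" "y \<le> 1"
  obtains r r' where "r \<le> 2 * K" "r' \<le> 2 * K" "odd r \<longleftrightarrow> even r'"
    "\<bar>2 * real K * y - real r\<bar> \<le> 1/2"
    "\<bar>2 * real K * y - real r'\<bar> = 1 - \<bar>2 * real K * y - real r\<bar>"
proof -
  obtain j where j: "j < 2 * K" "real j \<le> 2 * real K * y" "2 * real K * y \<le> real j + 1"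
    using half_grid_bracket[OF assms] .
  show ?thesis
  proof (cases "2 * real K * y - real j \<le> 1/2")
    case True
    then show ?thesis using that[of j "j + 1"] j by auto
  next
    case False
    then show ?thesis using that[of "j + 1" j] j by auto
  qed
qed

lemma mid_coords_double:
  assumes K: "K \<ge> 1" and y: "0 \<le> y" "y \<le> 1" and half: "\<bar>2 * real K * y - real r\<bar> = 1/2"
  shows "y \<in> mid_coords (2 * K)"
proof -
  have Kpos: "real K > 0" using K by simp
  obtain j where j: "odd j" "real j = 4 * real K * y"
  proof (cases "2 * real K * y \<ge> real r")
    case True
    then show ?thesis using that[of "2 * r + 1"] half by auto
  next
    case False
    then have "r \<ge> 1" using y Kpos by (cases r) auto
    then show ?thesis using that[of "2 * r - 1"] half False by (auto simp: of_nat_diff)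
  qed
  moreover have "4 * real K * y \<le> 4 * real K" using y(2) Kpos by (intro mult_left_le) auto
  ultimately have "j \<le> 2 * (2 * K)" by linarith
  moreover have "y = real j / (2 * real (2 * K))" using j(2) Kpos by simp
  ultimately show ?thesis unfolding mid_coords_def using j(1) by blast
qed

definition mixed_grid :: "nat \<Rightarrow> 'n set \<Rightarrow> (real^'n) set" where
  "mixed_grid K s = {v. \<forall>t. v$t \<in> (if t \<in> s then mid_coords K else grid_coords K)}"

lemma mixed_grid_coord:
  "v \<in> mixed_grid K s \<Longrightarrow> v$t \<in> (if t \<in> s then mid_coords K else grid_coords K)"
  unfolding mixed_grid_def by simp

lemma card_mixed_grid:
  fixes s :: "'n::finite set"
  assumes K: "K \<ge> 1"
  shows "finite (mixed_grid K s) \<and> card (mixed_grid K s) = K ^ card s * (K + 1) ^ (CARD('n) - card s)"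
proof -
  let ?F = "\<lambda>t. if t \<in> s then mid_coords K else grid_coords K"
  have "(\<Prod>t\<in>UNIV. card (?F t)) = (\<Prod>t\<in>UNIV. if t \<in> s then K else K + 1)"
    using card_grid_coords[OF K] card_mid_coords[OF K] by (intro prod.cong) auto
  also have "\<dots> = K ^ card s * (K + 1) ^ card (- s)"
    by (simp add: prod.If_cases Compl_eq_Diff_UNIV)
  also have "\<dots> = K ^ card s * (K + 1) ^ (CARD('n) - card s)"
    by (simp add: card_Compl_finite)
  finally show ?thesis
    using card_vec_set[of ?F] card_grid_coords[OF K] card_mid_coords[OF K]
    unfolding mixed_grid_def by simp
qed

lemma mixed_grid_disjoint:
  assumes K: "K \<ge> 1" and "s \<noteq> s'"
  shows "mixed_grid K s \<inter> mixed_grid K s' = {}"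
proof (rule ccontr)
  assume "mixed_grid K s \<inter> mixed_grid K s' \<noteq> {}"
  then obtain v where v: "v \<in> mixed_grid K s" "v \<in> mixed_grid K s'" by blast
  obtain t where "t \<in> sym_diff s s'" using assms(2) by blast
  then have "v$t \<in> grid_coords K \<inter> mid_coords K"
    using mixed_grid_coord[OF v(1), of t] mixed_grid_coord[OF v(2), of t] by auto
  then show False using grid_mid_coords_disjoint[OF K] by blast
qed

lemma mixed_grid_subset_double:
  assumes "K \<ge> 1" shows "mixed_grid K s \<subseteq> mixed_grid (2 * K) {}"
proof
  fix v assume "v \<in> mixed_grid K s"
  then have "v$t \<in> grid_coords (2 * K)" for t
    using mixed_grid_coord[of v K s t] half_coords_subset_double[OF assms] by (auto split: if_splits)
  then show "v \<in> mixed_grid (2 * K) {}" unfolding mixed_grid_def by simp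
qed

lemma mixed_grid_subset_cube:
  assumes "K \<ge> 1" shows "mixed_grid K s \<subseteq> cube4"
proof
  fix v assume "v \<in> mixed_grid K s"
  then have "v$t \<in> grid_coords K \<union> mid_coords K" for t
    using mixed_grid_coord[of v K s t] by (auto split: if_splits)
  then show "v \<in> cube4" unfolding cube4_def using half_coords_range[OF assms] by blast
qed

lemma mixed_grid_dist_same_class:
  assumes K: "K \<ge> 1" and "v \<in> mixed_grid K s" "w \<in> mixed_grid K s" "v \<noteq> w"
  shows "1 / real K \<le> dist v w"
proof -
  obtain t where t: "v$t \<noteq> w$t" using assms(4) by (metis vec_eq_iff)
  have "1 / real K \<le> \<bar>v$t - w$t\<bar>"
  proof (cases "t \<in> s")
    case True
    then show ?thesis using mixed_grid_coord[OF assms(2), of t] mixed_grid_coord[OF assms(3), of t]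
      mid_coords_sep[OF K _ _ t] by simp
  next
    case False
    then show ?thesis using mixed_grid_coord[OF assms(2), of t] mixed_grid_coord[OF assms(3), of t]
      grid_coords_sep[OF K _ _ t] by simp
  qed
  also have "\<dots> = dist (v$t) (w$t)" by (simp add: dist_real_def)
  also have "\<dots> \<le> dist v w" by (rule dist_vec_nth_le)
  finally show ?thesis .
qed

lemma mixed_grid_dist:
  assumes K: "K \<ge> 1" and v: "v \<in> mixed_grid K s" and w: "w \<in> mixed_grid K s'"
  shows "real (card (sym_diff s s')) * (1 / (2 * real K))\<^sup>2 \<le> (dist v w)\<^sup>2"
proof -
  let ?D = "sym_diff s s'"
  have "real (card ?D) * (1 / (2 * real K))\<^sup>2 = (\<Sum>t\<in>UNIV. if t \<in> ?D then (1 / (2 * real K))\<^sup>2 else 0)"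
    by (rule sum_if_mem_const[symmetric])
  also have "\<dots> \<le> (\<Sum>t\<in>UNIV. (v$t - w$t)\<^sup>2)"
  proof (rule sum_mono)
    fix t
    have sep: "1 / (2 * real K) \<le> \<bar>v$t - w$t\<bar>" if "t \<in> ?D"
    proof (cases "t \<in> s")
      case True
      then show ?thesis using that mixed_grid_coord[OF v, of t] mixed_grid_coord[OF w, of t]
        grid_mid_coords_sep[OF K, of "w$t" "v$t"] by (simp add: abs_minus_commute)
    next
      case False
      then show ?thesis using that mixed_grid_coord[OF v, of t] mixed_grid_coord[OF w, of t]
        grid_mid_coords_sep[OF K, of "v$t" "w$t"] by simp
    qed
    show "(if t \<in> ?D then (1 / (2 * real K))\<^sup>2 else 0) \<le> (v$t - w$t)\<^sup>2"
    proof (cases "t \<in> ?D")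
      case True
      have "(1 / (2 * real K))\<^sup>2 \<le> \<bar>v$t - w$t\<bar>\<^sup>2"
        by (rule power_mono[OF sep[OF True]]) simp
      then show ?thesis using True by simp
    qed auto
  qed
  finally show ?thesis by (simp add: power2_dist_vec)
qed

definition half_grid_point :: "nat \<Rightarrow> ('n \<Rightarrow> nat) \<Rightarrow> real^'n" where
  "half_grid_point K c = (\<chi> t. real (c t) / (2 * real K))"

lemma half_grid_point_mem:
  assumes "\<And>t. c t \<le> 2 * K" shows "half_grid_point K c \<in> mixed_grid K {t. odd (c t)}"
proof -
  have "real (c t) / (2 * real K) \<in> (if t \<in> {t. odd (c t)} then mid_coords K else grid_coords K)" for t
    using half_coord_mem[OF assms[of t]] by auto
  then show ?thesis unfolding mixed_grid_def half_grid_point_def by simp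
qed

lemma power2_dist_half_grid_point:
  assumes "K \<ge> 1"
  shows "(dist v (half_grid_point K c))\<^sup>2 = (\<Sum>t\<in>UNIV. (2 * real K * v$t - real (c t))\<^sup>2) / (2 * real K)\<^sup>2"
proof -
  have "(v$t - real (c t) / (2 * real K))\<^sup>2 = (2 * real K * v$t - real (c t))\<^sup>2 / (2 * real K)\<^sup>2" for t
    using assms by (simp add: power_divide[symmetric] field_simps)
  then show ?thesis
    unfolding power2_dist_vec half_grid_point_def by (simp add: sum_divide_distrib)
qed

section \<open>The body-centred grid and the checkerboard grid\<close>

definition separated :: "real \<Rightarrow> 'a::metric_space set \<Rightarrow> bool" where
  "separated r T \<longleftrightarrow> (\<forall>p\<in>T. \<forall>q\<in>T. p \<noteq> q \<longrightarrow> r \<le> dist p q)"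

definition covers_cube :: "real \<Rightarrow> (real^4) set \<Rightarrow> bool" where
  "covers_cube r S \<longleftrightarrow> (\<forall>v\<in>cube4. \<exists>p\<in>S. dist v p \<le> r)"

definition deep_holes_in :: "real \<Rightarrow> (real^4) set \<Rightarrow> (real^4) set \<Rightarrow> bool" where
  "deep_holes_in r S T \<longleftrightarrow> (\<forall>v\<in>cube4. (\<forall>p\<in>S. r \<le> dist v p) \<longrightarrow> v \<in> T)"

definition bcc_grid :: "nat \<Rightarrow> (real^4) set" where
  "bcc_grid K = mixed_grid K {} \<union> mixed_grid K UNIV"

definition d4_grid :: "nat \<Rightarrow> (real^4) set" where
  "d4_grid K = (\<Union>s\<in>{s. even (card s)}. mixed_grid K s)"

lemma bcc_grid_subset_d4_grid: "bcc_grid K \<subseteq> d4_grid K"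
proof -
  have "even (card ({}::4 set))" "even (card (UNIV::4 set))" by simp_all
  then show ?thesis unfolding bcc_grid_def d4_grid_def by blast
qed

lemma d4_grid_subset_bcc_grid_double: "K \<ge> 1 \<Longrightarrow> d4_grid K \<subseteq> bcc_grid (2 * K)"
  unfolding bcc_grid_def d4_grid_def using mixed_grid_subset_double by blast

lemma d4_grid_subset_cube: "K \<ge> 1 \<Longrightarrow> d4_grid K \<subseteq> cube4"
  unfolding d4_grid_def using mixed_grid_subset_cube by blast

lemma bcc_grid_subset_cube: "K \<ge> 1 \<Longrightarrow> bcc_grid K \<subseteq> cube4"
  using bcc_grid_subset_d4_grid d4_grid_subset_cube by blast

lemma d4_grid_eq_bcc_grid_Un:
  "d4_grid K = bcc_grid K \<union> (\<Union>s\<in>{s::4 set. card s = 2}. mixed_grid K s)"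
proof -
  have "even (card s) \<longleftrightarrow> s = {} \<or> s = UNIV \<or> card s = 2" for s :: "4 set"
  proof -
    have "card s \<le> 4" using card_mono[of UNIV s] by simp
    moreover have "s = UNIV \<longleftrightarrow> card s = 4"
      using card_subset_eq[of UNIV s] by auto
    moreover have "s = {} \<longleftrightarrow> card s = 0" by simp
    ultimately show ?thesis by presburger
  qed
  then show ?thesis unfolding d4_grid_def bcc_grid_def by auto
qed

lemma card_bcc_grid:
  assumes K: "K \<ge> 1" shows "finite (bcc_grid K) \<and> card (bcc_grid K) = (K + 1)^4 + K^4"
  unfolding bcc_grid_def
  using card_mixed_grid[OF K, of "{}::4 set"] card_mixed_grid[OF K, of "UNIV::4 set"]
    mixed_grid_disjoint[OF K, of "{}::4 set" UNIV]
  by (simp add: card_Un_disjoint)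

lemma card_d4_grid:
  assumes K: "K \<ge> 1"
  shows "finite (d4_grid K) \<and> card (d4_grid K) = (K + 1)^4 + K^4 + 6 * K^2 * (K + 1)^2"
proof -
  let ?F = "\<Union>s\<in>{s::4 set. card s = 2}. mixed_grid K s"
  have two_subsets: "card {s::4 set. card s = 2} = 6"
    using n_subsets[of "UNIV::4 set" 2] by (simp add: numeral_eq_Suc)
  have "card ?F = (\<Sum>s\<in>{s::4 set. card s = 2}. card (mixed_grid K s))"
    by (rule card_UN_disjoint) (use card_mixed_grid[where 'n=4, OF K] mixed_grid_disjoint[OF K] in auto)
  also have "\<dots> = (\<Sum>s\<in>{s::4 set. card s = 2}. K^2 * (K + 1)^2)"
    using card_mixed_grid[where 'n=4, OF K] by (intro sum.cong) auto
  also have "\<dots> = 6 * K^2 * (K + 1)^2"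
    using two_subsets by simp
  finally have F: "finite ?F \<and> card ?F = 6 * K^2 * (K + 1)^2"
    using card_mixed_grid[where 'n=4, OF K] by simp
  have "mixed_grid K s \<inter> bcc_grid K = {}" if "card s = 2" for s :: "4 set"
  proof -
    have "s \<noteq> {}" "s \<noteq> UNIV" using that by auto
    then show ?thesis
      unfolding bcc_grid_def using mixed_grid_disjoint[OF K, of s] by blast
  qed
  then have "bcc_grid K \<inter> ?F = {}" by blast
  then show ?thesis
    unfolding d4_grid_eq_bcc_grid_Un using card_bcc_grid[OF K] F by (simp add: card_Un_disjoint)
qed

lemma d4_grid_psubset_bcc_grid_double:
  assumes K: "K \<ge> 1" shows "d4_grid K \<subset> bcc_grid (2 * K)"
proof -
  have K2: "2 * K \<ge> 1" using K by simp
  have "mixed_grid (2 * K) (UNIV::4 set) \<noteq> {}"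
    using card_mixed_grid[OF K2, of "UNIV::4 set"] K by auto
  moreover have "d4_grid K \<inter> mixed_grid (2 * K) UNIV = {}"
    using mixed_grid_subset_double[OF K] mixed_grid_disjoint[OF K2, of "{}" "UNIV::4 set"]
    unfolding d4_grid_def by blast
  ultimately show ?thesis
    using d4_grid_subset_bcc_grid_double[OF K] unfolding bcc_grid_def by blast
qed

lemma bcc_grid_separated:
  assumes K: "K \<ge> 1" shows "separated (1 / real K) (bcc_grid K)"
  unfolding separated_def
proof (intro ballI impI)
  fix p q assume "p \<in> bcc_grid K" "q \<in> bcc_grid K" and pq: "p \<noteq> q"
  then obtain s1 s2 :: "4 set" where s: "s1 = {} \<or> s1 = UNIV" "s2 = {} \<or> s2 = UNIV"
    and p: "p \<in> mixed_grid K s1" and q: "q \<in> mixed_grid K s2"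
    unfolding bcc_grid_def by blast
  show "1 / real K \<le> dist p q"
  proof (cases "s1 = s2")
    case True
    then show ?thesis using mixed_grid_dist_same_class[OF K p _ pq] q by simp
  next
    case False
    then have "sym_diff s1 s2 = UNIV" using s by auto
    then have "(1 / real K)\<^sup>2 \<le> (dist p q)\<^sup>2"
      using mixed_grid_dist[OF K p q] by (simp add: power2_eq_square)
    then show ?thesis by (rule power2_le_imp_le) simp
  qed
qed

lemma d4_grid_separated:
  assumes K: "K \<ge> 1" shows "separated (sqrt 2 / (2 * real K)) (d4_grid K)"
  unfolding separated_def
proof (intro ballI impI)
  fix p q assume "p \<in> d4_grid K" "q \<in> d4_grid K" and pq: "p \<noteq> q"
  then obtain s1 s2 :: "4 set" where s: "even (card s1)" "even (card s2)"
    and p: "p \<in> mixed_grid K s1" and q: "q \<in> mixed_grid K s2"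
    unfolding d4_grid_def by blast
  have r2: "(sqrt 2 / (2 * real K))\<^sup>2 = 2 * (1 / (2 * real K))\<^sup>2"
    by (simp add: power_divide)
  have "(sqrt 2 / (2 * real K))\<^sup>2 \<le> (dist p q)\<^sup>2"
  proof (cases "s1 = s2")
    case True
    have "(sqrt 2 / (2 * real K))\<^sup>2 \<le> (1 / real K)\<^sup>2"
      unfolding r2 using K by (simp add: power_divide field_simps)
    also have "\<dots> \<le> (dist p q)\<^sup>2"
      using mixed_grid_dist_same_class[OF K p _ pq] q True by (simp add: power_mono)
    finally show ?thesis .
  next
    case False
    have "2 * (1 / (2 * real K))\<^sup>2 \<le> real (card (sym_diff s1 s2)) * (1 / (2 * real K))\<^sup>2"
      using card_sym_diff_even[OF _ _ s False] by (intro mult_right_mono) auto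
    then show ?thesis unfolding r2 using mixed_grid_dist[OF K p q] by linarith
  qed
  then show "sqrt 2 / (2 * real K) \<le> dist p q" by (rule power2_le_imp_le) simp
qed

lemma bcc_grid_bracket:
  assumes K: "K \<ge> 1" and v: "v \<in> cube4"
  obtains p q where "p \<in> mixed_grid K {}" "q \<in> mixed_grid K UNIV"
    "\<And>t. \<bar>v$t - p$t\<bar> + \<bar>v$t - q$t\<bar> = 1 / (2 * real K)"
proof -
  have "\<forall>t. \<exists>ab. fst ab \<in> grid_coords K \<and> snd ab \<in> mid_coords K \<and>
      \<bar>v$t - fst ab\<bar> + \<bar>v$t - snd ab\<bar> = 1 / (2 * real K)"
  proof
    fix t
    have "0 \<le> v$t" "v$t \<le> 1" using v unfolding cube4_def by auto
    then show "\<exists>ab. fst ab \<in> grid_coords K \<and> snd ab \<in> mid_coords K \<and>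
        \<bar>v$t - fst ab\<bar> + \<bar>v$t - snd ab\<bar> = 1 / (2 * real K)"
      by (metis coord_bracket[OF K] fst_conv snd_conv)
  qed
  then obtain ab where ab: "\<And>t. fst (ab t) \<in> grid_coords K" "\<And>t. snd (ab t) \<in> mid_coords K"
    "\<And>t. \<bar>v$t - fst (ab t)\<bar> + \<bar>v$t - snd (ab t)\<bar> = 1 / (2 * real K)"
    by metis
  show ?thesis
    by (rule that[of "\<chi> t. fst (ab t)" "\<chi> t. snd (ab t)"]) (simp_all add: mixed_grid_def ab)
qed

lemma bcc_grid_covers:
  assumes K: "K \<ge> 1" shows "covers_cube (sqrt 2 / (2 * real K)) (bcc_grid K)"
  unfolding covers_cube_def
proof
  fix v assume v: "v \<in> cube4"
  obtain p q where pq: "p \<in> mixed_grid K {}" "q \<in> mixed_grid K UNIV"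
    and bracket: "\<And>t. \<bar>v$t - p$t\<bar> + \<bar>v$t - q$t\<bar> = 1 / (2 * real K)"
    using bcc_grid_bracket[OF K v] by blast
  have "(dist v p)\<^sup>2 + (dist v q)\<^sup>2 \<le> 4 * (1 / (2 * real K))\<^sup>2"
    using sum_sq_split_le(1)[of "\<lambda>t. \<bar>v$t - p$t\<bar>" "\<lambda>t. \<bar>v$t - q$t\<bar>"] bracket
    by (simp add: power2_dist_vec)
  moreover have "(sqrt 2 / (2 * real K))\<^sup>2 = 2 * (1 / (2 * real K))\<^sup>2"
    by (simp add: power_divide)
  ultimately have "(dist v p)\<^sup>2 \<le> (sqrt 2 / (2 * real K))\<^sup>2 \<or> (dist v q)\<^sup>2 \<le> (sqrt 2 / (2 * real K))\<^sup>2"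
    by linarith
  then have "dist v p \<le> sqrt 2 / (2 * real K) \<or> dist v q \<le> sqrt 2 / (2 * real K)"
    by (auto dest: power2_le_imp_le)
  then show "\<exists>p\<in>bcc_grid K. dist v p \<le> sqrt 2 / (2 * real K)"
    using pq unfolding bcc_grid_def by blast
qed

lemma bcc_grid_deep_holes:
  assumes K: "K \<ge> 1" shows "deep_holes_in (sqrt 2 / (2 * real K)) (bcc_grid K) (d4_grid K)"
  unfolding deep_holes_in_def
proof (intro ballI impI)
  fix v assume v: "v \<in> cube4" and far: "\<forall>p\<in>bcc_grid K. sqrt 2 / (2 * real K) \<le> dist v p"
  define D where "D = 1 / (2 * real K)"
  obtain p q where pq: "p \<in> mixed_grid K {}" "q \<in> mixed_grid K UNIV"
    and bracket: "\<And>t. \<bar>v$t - p$t\<bar> + \<bar>v$t - q$t\<bar> = D"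
    using bcc_grid_bracket[OF K v] unfolding D_def by blast
  have "(sqrt 2 / (2 * real K))\<^sup>2 \<le> (dist v p)\<^sup>2" "(sqrt 2 / (2 * real K))\<^sup>2 \<le> (dist v q)\<^sup>2"
    using far pq unfolding bcc_grid_def by (auto intro!: power_mono)
  then have far_p: "2 * D\<^sup>2 \<le> (\<Sum>t\<in>UNIV. \<bar>v$t - p$t\<bar>\<^sup>2)"
    and far_q: "2 * D\<^sup>2 \<le> (\<Sum>t\<in>UNIV. \<bar>v$t - q$t\<bar>\<^sup>2)"
    by (simp_all add: power2_dist_vec D_def power_divide)
  then have on_grid: "\<bar>v$t - p$t\<bar> = 0 \<or> \<bar>v$t - q$t\<bar> = 0" for t
    using sum_sq_split_le(2)[of "\<lambda>t. \<bar>v$t - p$t\<bar>" "\<lambda>t. \<bar>v$t - q$t\<bar>" D t] bracket by simp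
  define s where "s = {t. v$t = q$t}"
  have coord: "v$t = (if t \<in> s then q$t else p$t)" for t
    using on_grid[of t] unfolding s_def by auto
  have "v \<in> mixed_grid K s"
    unfolding mixed_grid_def
    using coord mixed_grid_coord[OF pq(1)] mixed_grid_coord[OF pq(2)] by simp
  moreover have "card s = 2"
  proof -
    have "\<bar>v$t - p$t\<bar> = (if t \<in> s then D else 0)" "\<bar>v$t - q$t\<bar> = (if t \<in> -s then D else 0)" for t
      using bracket[of t] coord[of t] by (auto split: if_splits)
    then have "\<bar>v$t - p$t\<bar>\<^sup>2 = (if t \<in> s then D\<^sup>2 else 0)" "\<bar>v$t - q$t\<bar>\<^sup>2 = (if t \<in> -s then D\<^sup>2 else 0)" for t
      by (simp_all only: if_distrib[of "\<lambda>x. x\<^sup>2"] power_zero_numeral)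
    then have "2 * D\<^sup>2 \<le> card s * D\<^sup>2" "2 * D\<^sup>2 \<le> card (-s) * D\<^sup>2"
      using far_p far_q sum_if_mem_const[of s "D\<^sup>2"] sum_if_mem_const[of "-s" "D\<^sup>2"] by simp_all
    then have "2 \<le> card s" "2 \<le> card (-s)"
      using K by (simp_all add: D_def)
    then show ?thesis using card_Compl_finite[of s] by simp
  qed
  ultimately show "v \<in> d4_grid K" unfolding d4_grid_def by (auto intro!: exI[of _ s])
qed

lemma bcc_grid_double_of_offsets:
  assumes K: "K \<ge> 1" and v: "v \<in> cube4" and r: "\<And>t. r t \<le> 2 * K"
    and "(\<forall>t. 2 * real K * v$t = real (r t)) \<or> (\<forall>t. \<bar>2 * real K * v$t - real (r t)\<bar> = 1/2)"
  shows "v \<in> bcc_grid (2 * K)"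
  using assms(4)
proof
  assume "\<forall>t. 2 * real K * v$t = real (r t)"
  then have "v$t = real (r t) / (2 * real K)" for t using K by (simp add: field_simps)
  then have "v$t \<in> grid_coords (2 * K)" for t
    using half_coord_mem[OF r[of t]] half_coords_subset_double[OF K] by (auto split: if_splits)
  then show ?thesis unfolding bcc_grid_def mixed_grid_def by simp
next
  assume "\<forall>t. \<bar>2 * real K * v$t - real (r t)\<bar> = 1/2"
  moreover have "0 \<le> v$t" "v$t \<le> 1" for t using v unfolding cube4_def by auto
  ultimately have "v$t \<in> mid_coords (2 * K)" for t using mid_coords_double[OF K] by blast
  then show ?thesis unfolding bcc_grid_def mixed_grid_def by simp
qed

lemma round_to_half_grid:
  assumes K: "K \<ge> 1" and v: "v \<in> cube4"
  obtains r r' :: "4 \<Rightarrow> nat" where "\<And>t. r t \<le> 2 * K" "\<And>t. r' t \<le> 2 * K"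
    "\<And>t. odd (r t) \<longleftrightarrow> even (r' t)" "\<And>t. \<bar>2 * real K * v$t - real (r t)\<bar> \<le> 1/2"
    "\<And>t. \<bar>2 * real K * v$t - real (r' t)\<bar> = 1 - \<bar>2 * real K * v$t - real (r t)\<bar>"
proof -
  let ?w = "\<lambda>t. 2 * real K * v$t"
  have "\<forall>t. \<exists>rr. fst rr \<le> 2 * K \<and> snd rr \<le> 2 * K \<and> (odd (fst rr) \<longleftrightarrow> even (snd rr)) \<and>
      \<bar>?w t - fst rr\<bar> \<le> 1/2 \<and> \<bar>?w t - snd rr\<bar> = 1 - \<bar>?w t - fst rr\<bar>"
  proof
    fix t
    have "0 \<le> v$t" "v$t \<le> 1" using v unfolding cube4_def by auto
    then show "\<exists>rr. fst rr \<le> 2 * K \<and> snd rr \<le> 2 * K \<and> (odd (fst rr) \<longleftrightarrow> even (snd rr)) \<and>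
        \<bar>?w t - fst rr\<bar> \<le> 1/2 \<and> \<bar>?w t - snd rr\<bar> = 1 - \<bar>?w t - fst rr\<bar>"
      by (metis coord_round[OF K] fst_conv snd_conv)
  qed
  then obtain rr where "\<And>t. fst (rr t) \<le> 2 * K \<and> snd (rr t) \<le> 2 * K \<and> (odd (fst (rr t)) \<longleftrightarrow> even (snd (rr t))) \<and>
      \<bar>?w t - fst (rr t)\<bar> \<le> 1/2 \<and> \<bar>?w t - snd (rr t)\<bar> = 1 - \<bar>?w t - fst (rr t)\<bar>"
    by metis
  then show ?thesis by (intro that[of "\<lambda>t. fst (rr t)" "\<lambda>t. snd (rr t)"]) simp_all
qed

lemma sum_sq_fun_upd:
  fixes w :: "'a::finite \<Rightarrow> real" and r :: "'a \<Rightarrow> nat"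
  shows "(\<Sum>t\<in>UNIV. (w t - real ((r(i := k)) t))\<^sup>2) = (w i - real k)\<^sup>2 + (\<Sum>t\<in>-{i}. (w t - real (r t))\<^sup>2)"
proof -
  have "(\<Sum>t\<in>-{i}. (w t - real ((r(i := k)) t))\<^sup>2) = (\<Sum>t\<in>-{i}. (w t - real (r t))\<^sup>2)"
    by (rule sum.cong) auto
  then show ?thesis by (simp add: sum.remove[of UNIV i] Compl_eq_Diff_UNIV)
qed

text \<open>Round every coordinate of \<open>2K v\<close> to the nearest integer; if an odd number of the results
  are odd, move the coordinate with the largest rounding error to its other neighbour.\<close>

lemma d4_grid_rounding:
  assumes K: "K \<ge> 1" and v: "v \<in> cube4"
  obtains c where "\<And>t. c t \<le> 2 * K" "even (card {t. odd (c t)})"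
    "(\<Sum>t\<in>UNIV. (2 * real K * v$t - real (c t))\<^sup>2) \<le> 1"
    "1 \<le> (\<Sum>t\<in>UNIV. (2 * real K * v$t - real (c t))\<^sup>2) \<Longrightarrow> v \<in> bcc_grid (2 * K)"
proof -
  let ?w = "\<lambda>t. 2 * real K * v$t"
  obtain r r' where r: "\<And>t. r t \<le> 2 * K" "\<And>t. r' t \<le> 2 * K" "\<And>t. odd (r t) \<longleftrightarrow> even (r' t)"
    "\<And>t. \<bar>?w t - r t\<bar> \<le> 1/2" "\<And>t. \<bar>?w t - r' t\<bar> = 1 - \<bar>?w t - r t\<bar>"
    using round_to_half_grid[OF K v] by blast
  define d where "d t = \<bar>?w t - r t\<bar>" for t
  have d: "0 \<le> d t" "d t \<le> 1/2" for t using r(4) unfolding d_def by auto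
  have rigid: "v \<in> bcc_grid (2 * K)" if "(\<forall>t. d t = 0) \<or> (\<forall>t. d t = 1/2)"
    using bcc_grid_double_of_offsets[OF K v r(1)] that unfolding d_def by auto
  show ?thesis
  proof (cases "even (card {t. odd (r t)})")
    case True
    have S: "(\<Sum>t\<in>UNIV. (?w t - real (r t))\<^sup>2) = (\<Sum>t\<in>UNIV. (d t)\<^sup>2)" unfolding d_def by simp
    show ?thesis
    proof (rule that[of r, OF r(1) True])
      show "(\<Sum>t\<in>UNIV. (?w t - real (r t))\<^sup>2) \<le> 1"
        using sum_sq_le_quarter(1)[of d] d unfolding S by simp
      assume "1 \<le> (\<Sum>t\<in>UNIV. (?w t - real (r t))\<^sup>2)"
      then have "d t = 1/2" for t using sum_sq_le_quarter(2)[of d t] d unfolding S by simp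
      then show "v \<in> bcc_grid (2 * K)" using rigid by blast
    qed
  next
    case False
    have "Max (range d) \<in> range d" by (rule Max_in) auto
    then obtain i where "d i = Max (range d)" by (metis imageE)
    then have i: "d t \<le> d i" for t using Max_ge[of "range d" "d t"] by simp
    let ?c = "r(i := r' i)"
    have "(?w i - real (r' i))\<^sup>2 = (1 - d i)\<^sup>2"
      using r(5)[of i] unfolding d_def by (metis power2_abs)
    then have S: "(\<Sum>t\<in>UNIV. (?w t - real (?c t))\<^sup>2) = (1 - d i)\<^sup>2 + (\<Sum>t\<in>-{i}. (d t)\<^sup>2)"
      unfolding sum_sq_fun_upd d_def by simp
    have "odd (r' i) \<longleftrightarrow> even (r i)" using r(3)[of i] by auto
    then have c_even: "even (card {t. odd (?c t)})"
      using even_card_odd_update[of "r' i" r i] False by simp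
    have c_le: "?c t \<le> 2 * K" for t using r(1,2) by simp
    show ?thesis
    proof (rule that[of ?c, OF c_le c_even])
      show "(\<Sum>t\<in>UNIV. (?w t - real (?c t))\<^sup>2) \<le> 1"
        unfolding S by (rule sum_sq_flip_max_le_one(1)[of d i, OF d i])
      assume "1 \<le> (\<Sum>t\<in>UNIV. (?w t - real (?c t))\<^sup>2)"
      then show "v \<in> bcc_grid (2 * K)"
        unfolding S using sum_sq_flip_max_le_one(2)[of d i, OF d i] rigid by blast
    qed
  qed
qed

lemma d4_grid_nearest:
  assumes K: "K \<ge> 1" and v: "v \<in> cube4"
  obtains p where "p \<in> d4_grid K" "dist v p \<le> 1 / (2 * real K)"
    "1 / (2 * real K) \<le> dist v p \<Longrightarrow> v \<in> bcc_grid (2 * K)"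
proof -
  obtain c where c: "\<And>t. c t \<le> 2 * K" "even (card {t. odd (c t)})"
    and S: "(\<Sum>t\<in>UNIV. (2 * real K * v$t - real (c t))\<^sup>2) \<le> 1"
    and rigid: "1 \<le> (\<Sum>t\<in>UNIV. (2 * real K * v$t - real (c t))\<^sup>2) \<Longrightarrow> v \<in> bcc_grid (2 * K)"
    using d4_grid_rounding[OF K v] by blast
  let ?p = "half_grid_point K c"
  have "?p \<in> d4_grid K"
    unfolding d4_grid_def using half_grid_point_mem[OF c(1)] c(2) by (intro UN_I[of "{t. odd (c t)}"]) auto
  moreover have dist: "(dist v ?p)\<^sup>2 = (\<Sum>t\<in>UNIV. (2 * real K * v$t - real (c t))\<^sup>2) / (2 * real K)\<^sup>2"
    by (rule power2_dist_half_grid_point[OF K])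
  moreover have "dist v ?p \<le> 1 / (2 * real K)"
  proof (rule power2_le_imp_le)
    show "(dist v ?p)\<^sup>2 \<le> (1 / (2 * real K))\<^sup>2"
      unfolding dist power_divide using S by (intro divide_right_mono) auto
  qed (use K in simp)
  moreover have "v \<in> bcc_grid (2 * K)" if "1 / (2 * real K) \<le> dist v ?p"
  proof (rule rigid)
    have "1 / (2 * real K)\<^sup>2 \<le> (dist v ?p)\<^sup>2"
      using power_mono[OF that, of 2] by (simp add: power_divide)
    then show "1 \<le> (\<Sum>t\<in>UNIV. (2 * real K * v$t - real (c t))\<^sup>2)"
      unfolding dist using K by (simp add: divide_le_cancel)
  qed
  ultimately show ?thesis using that by blast
qed

lemma d4_grid_covers: "K \<ge> 1 \<Longrightarrow> covers_cube (1 / (2 * real K)) (d4_grid K)"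
  unfolding covers_cube_def by (metis d4_grid_nearest)

lemma d4_grid_deep_holes: "K \<ge> 1 \<Longrightarrow> deep_holes_in (1 / (2 * real K)) (d4_grid K) (bcc_grid (2 * K))"
  unfolding deep_holes_in_def by (metis d4_grid_nearest)

lemma cube_centre_mem_bcc_grid: "(\<chi> i. 1/2) \<in> bcc_grid 1"
proof -
  have "real 1 / (2 * real 1) \<in> mid_coords 1" using half_coord_mem[of 1 1] by simp
  then show ?thesis unfolding bcc_grid_def mixed_grid_def by simp
qed

lemma cube_centre_deep_holes: "deep_holes_in 1 {\<chi> i. 1/2} (bcc_grid 1)"
  unfolding deep_holes_in_def
proof (intro ballI impI)
  fix v :: "real^4" assume v: "v \<in> cube4" and far: "\<forall>p\<in>{\<chi> i. 1/2}. 1 \<le> dist v p"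
  define d where "d t = \<bar>v$t - 1/2\<bar>" for t
  have "0 \<le> v$t" "v$t \<le> 1" for t using v unfolding cube4_def by auto
  then have d: "0 \<le> d t" "d t \<le> 1/2" for t unfolding d_def abs_diff_le_iff by simp_all
  have "1 \<le> (dist v (\<chi> i. 1/2))\<^sup>2" using far by (simp add: one_le_power)
  then have "CARD(4) / 4 \<le> (\<Sum>t\<in>UNIV. (d t)\<^sup>2)" unfolding power2_dist_vec d_def by simp
  then have half: "d t = 1/2" for t using sum_sq_le_quarter(2)[of d t] d by blast
  have grid: "0 \<in> grid_coords 1" "1 \<in> grid_coords 1"
    using half_coord_mem[of 0 1] half_coord_mem[of 2 1] by simp_all
  have "v$t = 0 \<or> v$t = 1" for t using half[of t] unfolding d_def by (auto simp: abs_if split: if_splits)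
  then have "v$t \<in> grid_coords 1" for t using grid by metis
  then have "v \<in> mixed_grid 1 {}" unfolding mixed_grid_def by auto
  then show "v \<in> bcc_grid 1" unfolding bcc_grid_def by blast
qed

lemma bcc_grid_min_dist_attained:
  assumes K: "K \<ge> 1" shows "\<exists>p\<in>bcc_grid K. \<exists>q\<in>bcc_grid K. p \<noteq> q \<and> dist p q = 1 / real K"
proof -
  let ?q = "\<chi> t. if t = 0 then 1 / real K else 0 :: real^4"
  have "real 0 / (2 * real K) \<in> grid_coords K" "real 2 / (2 * real K) \<in> grid_coords K"
    using half_coord_mem[of 0 K] half_coord_mem[of 2 K] K by simp_all
  then have "0 \<in> mixed_grid K {}" "?q \<in> mixed_grid K {}"
    unfolding mixed_grid_def by auto
  moreover have "(dist 0 ?q)\<^sup>2 = (1 / real K)\<^sup>2"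
  proof -
    have "((0::real^4)$t - ?q$t)\<^sup>2 = (if t = 0 then (1 / real K)\<^sup>2 else 0)" for t by simp
    then show ?thesis unfolding power2_dist_vec by simp
  qed
  then have "dist 0 ?q = 1 / real K" by (simp add: power2_eq_iff_nonneg)
  moreover have "0 \<noteq> ?q" using K by (auto simp: vec_eq_iff)
  ultimately show ?thesis unfolding bcc_grid_def by blast
qed

lemma card_bcc_grid_pow: "card (bcc_grid (2^m)) = n_m m"
  using card_bcc_grid[of "2^m"] unfolding n_m_def by (simp add: power_mult[symmetric] mult.commute)

lemma card_d4_grid_pow: "card (d4_grid (2^m)) = n_m m + l_m m"
  using card_d4_grid[of "2^m"] unfolding n_m_def l_m_def by (simp add: power_mult[symmetric] mult.commute)

lemma card_bcc_grid_double_pow: "card (bcc_grid (2 * 2^m)) = n_m (Suc m)"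
  using card_bcc_grid_pow[of "Suc m"] by simp

lemma n_m_pos: "0 < n_m m" by (simp add: n_m_def)

lemma l_m_pos: "0 < l_m m" by (simp add: l_m_def)

lemma gamma_m_pos: "0 < gamma_m m" by (simp add: gamma_m_def)

lemma n_m_l_m_less: "n_m m + l_m m < n_m (Suc m)"
  using psubset_card_mono[OF _ d4_grid_psubset_bcc_grid_double[of "2^m"]] card_bcc_grid[of "2 * 2^m"]
  by (simp add: card_d4_grid_pow card_bcc_grid_double_pow)

section \<open>Farthest-point insertion\<close>

lemma min_dist_le: "n \<ge> 1 \<Longrightarrow> p \<in> x ` {1..n} \<Longrightarrow> min_dist x n y \<le> dist y p"
  unfolding min_dist_def by (rule Min_le) auto

lemma le_min_dist: "n \<ge> 1 \<Longrightarrow> (\<And>p. p \<in> x ` {1..n} \<Longrightarrow> r \<le> dist y p) \<Longrightarrow> r \<le> min_dist x n y"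
  unfolding min_dist_def by (subst Min_ge_iff) auto

lemma CR_between:
  assumes n: "n \<ge> 1" and S: "S \<subseteq> x ` {1..n}" and T: "x ` {1..n} \<subset> T" "T \<subseteq> cube4"
    and cover: "covers_cube r S" and sep: "separated r T"
  shows "CR x n = r"
proof -
  have up: "min_dist x n v \<le> r" if "v \<in> cube4" for v
    using cover that S min_dist_le[OF n] unfolding covers_cube_def by (meson order_trans subsetD)
  obtain h where h: "h \<in> T" "h \<notin> x ` {1..n}" using T(1) by blast
  have "r \<le> min_dist x n h"
    using le_min_dist[OF n] sep h T(1) unfolding separated_def by (metis psubsetE subsetD)
  moreover have "h \<in> cube4" using h T(2) by blast
  ultimately have "r \<le> CR x n"
    unfolding CR_def using up by (intro cSUP_upper2[of _ _ h]) (auto intro!: bdd_aboveI2)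
  moreover have "CR x n \<le> r"
    unfolding CR_def using up \<open>h \<in> cube4\<close> by (intro cSUP_least) auto
  ultimately show ?thesis by simp
qed

lemma SR_eqI:
  assumes inj: "card (x ` {1..n}) = n" and sep: "separated s (x ` {1..n})"
    and pq: "p \<in> x ` {1..n}" "q \<in> x ` {1..n}" "p \<noteq> q" "dist p q = s"
  shows "SR x n = s / 2"
proof -
  let ?A = "{dist (x i) (x j) | i j. i \<in> {1..n} \<and> j \<in> {1..n} \<and> i \<noteq> j}"
  have "inj_on x {1..n}" using inj by (simp add: inj_on_iff_eq_card)
  then have "s \<le> a" if a: "a \<in> ?A" for a
  proof -
    obtain i j where ij: "a = dist (x i) (x j)" "i \<in> {1..n}" "j \<in> {1..n}" "i \<noteq> j"
      using a by blast
    then have "x i \<noteq> x j" using \<open>inj_on x {1..n}\<close> by (auto dest: inj_onD)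
    then show ?thesis using sep ij unfolding separated_def by blast
  qed
  moreover have "s \<in> ?A" using pq by blast
  moreover have "finite ?A"
    by (rule finite_subset[of _ "(\<lambda>(i, j). dist (x i) (x j)) ` ({1..n} \<times> {1..n})"]) auto
  ultimately have "Min ?A = s" by (intro Min_eqI) auto
  then show ?thesis unfolding SR_def by simp
qed

lemma SR_between:
  assumes inj: "card (x ` {1..n}) = n" and S: "S \<subset> x ` {1..n}"
    and T: "x ` {1..n} \<subseteq> T" "T \<subseteq> cube4"
    and cover: "covers_cube r S" and sep: "separated r T"
  shows "SR x n = r / 2"
proof -
  obtain h where h: "h \<in> x ` {1..n}" "h \<notin> S" using S by blast
  then obtain p where p: "p \<in> S" "dist h p \<le> r"
    using cover T unfolding covers_cube_def by blast
  have "h \<noteq> p" using p(1) h(2) by blast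
  moreover have "p \<in> x ` {1..n}" using p(1) S by blast
  moreover have "r \<le> dist h p"
    using sep h(1) \<open>p \<in> x ` {1..n}\<close> T(1) \<open>h \<noteq> p\<close> unfolding separated_def by blast
  then have "dist h p = r" using p(2) by simp
  moreover have "separated r (x ` {1..n})" using sep T(1) unfolding separated_def by blast
  ultimately show ?thesis using SR_eqI[OF inj _ h(1)] by blast
qed

context
  fixes x :: "nat \<Rightarrow> real^4"
  assumes greedy: "\<And>n. n \<ge> 1 \<Longrightarrow> x (Suc n) \<in> cube4 \<and>
                   (\<forall>y\<in>cube4. min_dist x n y \<le> min_dist x n (x (Suc n)))"
begin

lemma greedy_step:
  assumes n: "n \<ge> 1" and S: "S \<subseteq> x ` {1..n}" and T: "x ` {1..n} \<subset> T" "T \<subseteq> cube4"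
    and r: "r > 0" and holes: "deep_holes_in r S T" and sep: "separated r T"
  shows "x (Suc n) \<in> T - x ` {1..n}"
proof -
  obtain h where h: "h \<in> T" "h \<notin> x ` {1..n}" using T(1) by blast
  have "r \<le> min_dist x n h"
    using le_min_dist[OF n] sep h T(1) unfolding separated_def by (metis psubsetE subsetD)
  also have "\<dots> \<le> min_dist x n (x (Suc n))" using greedy[OF n] h(1) T(2) by blast
  finally have far: "r \<le> min_dist x n (x (Suc n))" .
  have "x (Suc n) \<in> T"
    using holes greedy[OF n] far S min_dist_le[OF n] unfolding deep_holes_in_def
    by (meson order_trans subsetD)
  moreover have "x (Suc n) \<notin> x ` {1..n}"
    using min_dist_le[OF n, of "x (Suc n)" x "x (Suc n)"] far r by auto
  ultimately show ?thesis by blast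
qed

lemma greedy_fills:
  assumes start: "x ` {1..n0} = S" "card S = n0" "n0 \<ge> 1"
    and T: "finite T" "S \<subseteq> T" "T \<subseteq> cube4" and r: "r > 0"
    and holes: "deep_holes_in r S T" and sep: "separated r T"
    and n: "n0 \<le> n" "n \<le> card T"
  shows "S \<subseteq> x ` {1..n} \<and> x ` {1..n} \<subseteq> T \<and> card (x ` {1..n}) = n"
  using n(1)
proof (induction rule: dec_induct)
  case base
  then show ?case using start T(2) by simp
next
  case (step k)
  then have k: "k \<ge> 1" "S \<subseteq> x ` {1..k}" "x ` {1..k} \<subseteq> T" "card (x ` {1..k}) = k"
    using start(3) by auto
  have "x ` {1..k} \<noteq> T" using k(4) step.hyps(2) n(2) by auto
  then have "x (Suc k) \<in> T - x ` {1..k}"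
    using greedy_step[OF k(1,2) _ T(3) r holes sep] k(3) by blast
  moreover have "x ` {1..Suc k} = insert (x (Suc k)) (x ` {1..k})"
    by (simp add: atLeastAtMostSuc_conv)
  ultimately show ?case using k T(1) by (auto simp: finite_subset)
qed

lemma greedy_fills_d4_grid:
  assumes K: "K \<ge> 1" and level: "x ` {1..card (bcc_grid K)} = bcc_grid K"
    and n: "card (bcc_grid K) \<le> n" "n \<le> card (d4_grid K)"
  shows "bcc_grid K \<subseteq> x ` {1..n} \<and> x ` {1..n} \<subseteq> d4_grid K \<and> card (x ` {1..n}) = n"
proof (rule greedy_fills[OF level refl _ _ bcc_grid_subset_d4_grid d4_grid_subset_cube[OF K] _
      bcc_grid_deep_holes[OF K] d4_grid_separated[OF K] n])
  show "card (bcc_grid K) \<ge> 1" "finite (d4_grid K)"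
    using card_bcc_grid[OF K] card_d4_grid[OF K] by (simp_all add: Suc_le_eq)
qed (use K in simp)

lemma greedy_fills_bcc_grid_double:
  assumes K: "K \<ge> 1" and level: "x ` {1..card (bcc_grid K)} = bcc_grid K"
    and n: "card (d4_grid K) \<le> n" "n \<le> card (bcc_grid (2 * K))"
  shows "d4_grid K \<subseteq> x ` {1..n} \<and> x ` {1..n} \<subseteq> bcc_grid (2 * K) \<and> card (x ` {1..n}) = n"
proof -
  have K2: "2 * K \<ge> 1" using K by simp
  have "card (bcc_grid K) \<le> card (d4_grid K)"
    using card_mono[OF _ bcc_grid_subset_d4_grid] card_d4_grid[OF K] by blast
  then have "x ` {1..card (d4_grid K)} = d4_grid K"
    using greedy_fills_d4_grid[OF K level] card_d4_grid[OF K] by (simp add: card_subset_eq)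
  moreover have "separated (1 / (2 * real K)) (bcc_grid (2 * K))"
    using bcc_grid_separated[OF K2] by simp
  ultimately show ?thesis
    using greedy_fills[OF _ refl _ _ d4_grid_subset_bcc_grid_double[OF K] bcc_grid_subset_cube[OF K2] _
      d4_grid_deep_holes[OF K] _ n] card_d4_grid[OF K] card_bcc_grid[OF K2] K by (simp add: Suc_le_eq)
qed

context
  assumes x1: "x 1 = (\<chi> i. 1/2)"
begin

lemma greedy_bcc_grid_levels: "x ` {1..n_m m} = bcc_grid (2^m)"
proof (induction m)
  case 0
  have "x ` {1..1} = {\<chi> i. 1/2}" using x1 by simp
  from greedy_fills[OF this _ _ _ _ _ _ cube_centre_deep_holes _ _ order_refl]
  have "x ` {1..card (bcc_grid 1)} \<subseteq> bcc_grid 1" "card (x ` {1..card (bcc_grid 1)}) = card (bcc_grid 1)"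
    using cube_centre_mem_bcc_grid card_bcc_grid[of 1] bcc_grid_subset_cube[of 1] bcc_grid_separated[of 1]
    by simp_all
  then show ?case using card_bcc_grid_pow[of 0] card_bcc_grid[of 1] by (simp add: card_subset_eq)
next
  case (Suc m)
  have K: "(2::nat)^m \<ge> 1" by simp
  have "x ` {1..n_m (Suc m)} \<subseteq> bcc_grid (2 * 2^m)" "card (x ` {1..n_m (Suc m)}) = n_m (Suc m)"
    using greedy_fills_bcc_grid_double[OF K, of "n_m (Suc m)"] Suc.IH n_m_l_m_less[of m]
    by (simp_all add: card_bcc_grid_pow card_d4_grid_pow card_bcc_grid_double_pow)
  then show ?case using card_bcc_grid_double_pow[of m] card_bcc_grid[of "2 * 2^m"] by (simp add: card_subset_eq)
qed

lemma greedy_bcc_phase: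
  assumes "n_m m \<le> n" "n \<le> n_m m + l_m m"
  shows "bcc_grid (2^m) \<subseteq> x ` {1..n} \<and> x ` {1..n} \<subseteq> d4_grid (2^m) \<and> card (x ` {1..n}) = n"
  using greedy_fills_d4_grid[of "2^m" n] greedy_bcc_grid_levels[of m] assms
  by (simp add: card_bcc_grid_pow card_d4_grid_pow)

lemma greedy_d4_phase:
  assumes "n_m m + l_m m \<le> n" "n \<le> n_m (Suc m)"
  shows "d4_grid (2^m) \<subseteq> x ` {1..n} \<and> x ` {1..n} \<subseteq> bcc_grid (2 * 2^m) \<and> card (x ` {1..n}) = n"
  using greedy_fills_bcc_grid_double[of "2^m" n] greedy_bcc_grid_levels[of m] assms
  by (simp add: card_bcc_grid_pow card_d4_grid_pow card_bcc_grid_double_pow)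

lemma CR_bcc_phase:
  assumes n: "n_m m \<le> n" "n < n_m m + l_m m"
  shows "CR x n = gamma_m m * sqrt 2 / 2"
proof -
  have K: "(2::nat)^m \<ge> 1" by simp
  have X: "bcc_grid (2^m) \<subseteq> x ` {1..n}" "x ` {1..n} \<subseteq> d4_grid (2^m)" "card (x ` {1..n}) = n"
    using greedy_bcc_phase[OF n(1)] n(2) by simp_all
  then have "x ` {1..n} \<subset> d4_grid (2^m)" using n(2) card_d4_grid_pow[of m] by auto
  then have "CR x n = sqrt 2 / (2 * real (2^m))"
    using CR_between[OF _ X(1) _ d4_grid_subset_cube[OF K] bcc_grid_covers[OF K] d4_grid_separated[OF K]]
      n(1) n_m_pos[of m] by simp
  then show ?thesis by (simp add: gamma_m_def)
qed

lemma CR_d4_phase: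
  assumes n: "n_m m + l_m m \<le> n" "n < n_m (Suc m)"
  shows "CR x n = gamma_m m / 2"
proof -
  have K: "(2::nat)^m \<ge> 1" "2 * (2::nat)^m \<ge> 1" by simp_all
  have X: "d4_grid (2^m) \<subseteq> x ` {1..n}" "x ` {1..n} \<subseteq> bcc_grid (2 * 2^m)" "card (x ` {1..n}) = n"
    using greedy_d4_phase[OF n(1)] n(2) by simp_all
  then have "x ` {1..n} \<subset> bcc_grid (2 * 2^m)" using n(2) card_bcc_grid_double_pow[of m] by auto
  moreover have "separated (1 / (2 * real (2^m))) (bcc_grid (2 * 2^m))"
    using bcc_grid_separated[OF K(2)] by simp
  ultimately have "CR x n = 1 / (2 * real (2^m))"
    using CR_between[OF _ X(1) _ bcc_grid_subset_cube[OF K(2)] d4_grid_covers[OF K(1)]]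
      n(1) n_m_pos[of m] by simp
  then show ?thesis by (simp add: gamma_m_def)
qed

lemma SR_bcc_level: "SR x (n_m m) = gamma_m m / 2"
proof -
  have K: "(2::nat)^m \<ge> 1" by simp
  obtain p q where pq: "p \<in> bcc_grid (2^m)" "q \<in> bcc_grid (2^m)" "p \<noteq> q" "dist p q = 1 / real (2^m)"
    using bcc_grid_min_dist_attained[OF K] by blast
  have X: "x ` {1..n_m m} = bcc_grid (2^m)" by (rule greedy_bcc_grid_levels)
  have "SR x (n_m m) = 1 / real (2^m) / 2"
    by (rule SR_eqI[of x "n_m m" "1 / real (2^m)" p q])
      (use X card_bcc_grid_pow[of m] bcc_grid_separated[OF K] pq in simp_all)
  then show ?thesis by (simp add: gamma_m_def)
qed

lemma SR_bcc_phase: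
  assumes n: "n_m m < n" "n \<le> n_m m + l_m m"
  shows "SR x n = gamma_m m / (2 * sqrt 2)"
proof -
  have K: "(2::nat)^m \<ge> 1" by simp
  have X: "bcc_grid (2^m) \<subseteq> x ` {1..n}" "x ` {1..n} \<subseteq> d4_grid (2^m)" "card (x ` {1..n}) = n"
    using greedy_bcc_phase[OF _ n(2)] n(1) by simp_all
  then have "bcc_grid (2^m) \<subset> x ` {1..n}" using n(1) card_bcc_grid_pow[of m] by auto
  then have "SR x n = sqrt 2 / (2 * real (2^m)) / 2"
    using SR_between[OF X(3) _ X(2) d4_grid_subset_cube[OF K] bcc_grid_covers[OF K] d4_grid_separated[OF K]]
    by simp
  moreover have "sqrt 2 / (2 * real (2^m)) / 2 = gamma_m m / (2 * sqrt 2)"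
    by (simp add: gamma_m_def field_simps)
  ultimately show ?thesis by simp
qed

lemma SR_d4_phase:
  assumes n: "n_m m + l_m m < n" "n \<le> n_m (Suc m)"
  shows "SR x n = gamma_m m / 4"
proof -
  have K: "(2::nat)^m \<ge> 1" "2 * (2::nat)^m \<ge> 1" by simp_all
  have X: "d4_grid (2^m) \<subseteq> x ` {1..n}" "x ` {1..n} \<subseteq> bcc_grid (2 * 2^m)" "card (x ` {1..n}) = n"
    using greedy_d4_phase[OF _ n(2)] n(1) by simp_all
  then have "d4_grid (2^m) \<subset> x ` {1..n}" using n(1) card_d4_grid_pow[of m] by auto
  moreover have "separated (1 / (2 * real (2^m))) (bcc_grid (2 * 2^m))"
    using bcc_grid_separated[OF K(2)] by simp
  ultimately have "SR x n = 1 / (2 * real (2^m)) / 2"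
    using SR_between[OF X(3) _ X(2) bcc_grid_subset_cube[OF K(2)] d4_grid_covers[OF K(1)]] by simp
  then show ?thesis by (simp add: gamma_m_def)
qed

lemma radii_at_bcc_level:
  "SR x (n_m m) = gamma_m m / 2 \<and> CR x (n_m m) = gamma_m m * sqrt 2 / 2 \<and> MR x (n_m m) = sqrt 2"
proof -
  have SR: "SR x (n_m m) = gamma_m m / 2" and CR: "CR x (n_m m) = gamma_m m * sqrt 2 / 2"
    using SR_bcc_level CR_bcc_phase[of m "n_m m"] l_m_pos[of m] by simp_all
  show ?thesis unfolding MR_def SR CR using gamma_m_pos[of m] by simp
qed

lemma radii_adding_face_centres:
  assumes "n_m m < n" "n < n_m m + l_m m"
  shows "SR x n = gamma_m m / (2 * sqrt 2) \<and> CR x n = gamma_m m * sqrt 2 / 2 \<and> MR x n = 2"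
proof -
  have SR: "SR x n = gamma_m m / (2 * sqrt 2)" and CR: "CR x n = gamma_m m * sqrt 2 / 2"
    using SR_bcc_phase[of m n] CR_bcc_phase[of m n] assms by simp_all
  show ?thesis unfolding MR_def SR CR using gamma_m_pos[of m] by (simp add: field_simps)
qed

lemma radii_at_d4_level:
  "SR x (n_m m + l_m m) = gamma_m m / (2 * sqrt 2) \<and> CR x (n_m m + l_m m) = gamma_m m / 2 \<and>
    MR x (n_m m + l_m m) = sqrt 2"
proof -
  have SR: "SR x (n_m m + l_m m) = gamma_m m / (2 * sqrt 2)" and CR: "CR x (n_m m + l_m m) = gamma_m m / 2"
    using SR_bcc_phase[of m] CR_d4_phase[of m] l_m_pos[of m] n_m_l_m_less[of m] by simp_all
  show ?thesis unfolding MR_def SR CR using gamma_m_pos[of m] by (simp add: field_simps)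
qed

lemma radii_refining:
  assumes "n_m m + l_m m < n" "n < n_m (Suc m)"
  shows "SR x n = gamma_m m / 4 \<and> CR x n = gamma_m m / 2 \<and> MR x n = 2"
proof -
  have SR: "SR x n = gamma_m m / 4" and CR: "CR x n = gamma_m m / 2"
    using SR_d4_phase[of m n] CR_d4_phase[of m n] assms by simp_all
  show ?thesis unfolding MR_def SR CR using gamma_m_pos[of m] by simp
qed

end

end

theorem theorem4:
  fixes x :: "nat \<Rightarrow> real^4"
  assumes x1: "x 1 = (\<chi> i. 1/2)"
    and greedy: "\<And>n. n \<ge> 1 \<Longrightarrow> x (Suc n) \<in> cube4 \<and>
                   (\<forall>y\<in>cube4. min_dist x n y \<le> min_dist x n (x (Suc n)))"
  shows "(\<forall>m n. n = n_m m \<longrightarrow>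
            SR x n = gamma_m m / 2 \<and> CR x n = gamma_m m * sqrt 2 / 2 \<and> MR x n = sqrt 2)
       \<and> (\<forall>m n. n_m m + 1 \<le> n \<and> n \<le> n_m m + l_m m - 1 \<longrightarrow>
            SR x n = gamma_m m / (2 * sqrt 2) \<and> CR x n = gamma_m m * sqrt 2 / 2 \<and> MR x n = 2)
       \<and> (\<forall>m n. n = n_m m + l_m m \<longrightarrow>
            SR x n = gamma_m m / (2 * sqrt 2) \<and> CR x n = gamma_m m / 2 \<and> MR x n = sqrt 2)
       \<and> (\<forall>m n. n_m m + l_m m + 1 \<le> n \<and> n \<le> n_m (Suc m) - 1 \<longrightarrow>
            SR x n = gamma_m m / 4 \<and> CR x n = gamma_m m / 2 \<and> MR x n = 2)"
  apply (intro conjI; intro allI impI)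
  subgoal for m n using radii_at_bcc_level[OF greedy x1, of m] by simp
  subgoal for m n using radii_adding_face_centres[OF greedy x1, of m n] l_m_pos[of m] by auto
  subgoal for m n using radii_at_d4_level[OF greedy x1, of m] by simp
  subgoal for m n using radii_refining[OF greedy x1, of m n] n_m_pos[of "Suc m"] by auto
  done

end
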